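(* Let $\mathbb{H}$ be a reproducing kernel Hilbert space with inner product $\langle\cdot,\cdot\rangle$ and feature map $\phi$, let $\Sigma:=\operatorname{Var}\phi(X)$, and let $(X,A,Y)$ be jointly distributed with $Y=\langle\phi(X),y\rangle$ and $A=\langle\phi(X),a\rangle$ for some nonzero $y,a\in\mathbb{H}$, with $\operatorname{Var}(Y),\operatorname{Var}(A)>0$; let $\rho_{YA}$ be the correlation coefficient of $Y$ and $A$. Suppose $(X,\phi)$ is regular. Then: (i) there exists a (possibly randomized) representation $Z=g(X)$ with $\operatorname{Var}\mathbb{E}[A\mid Z]=0$ and $\operatorname{Var}\mathbb{E}[Y\mid Z]=\operatorname{Var}(Y)(1-\rho_{YA}^2)$; (ii) there exists a (possibly randomized) representation $Z=g(X)$ with $\operatorname{Var}\mathbb{E}[Y\mid Z]=\operatorname{Var}(Y)$ and $\operatorname{Var}\mathbb{E}[A\mid Z]=\operatorname{Var}(A)\rho_{YA}^2$; (iii) for every $\lambda\ge0$ there exists a (possibly randomized) representation $Z=g(X)$ with $$\lambda\operatorname{Var}\mathbb{E}[A\mid Z]-\operatorname{Var}\mathbb{E}[Y\mid Z]=\frac12\Big\{\lambda\operatorname{Var}(A)-\operatorname{Var}(Y)-\sqrt{\operatorname{Var}^2(Y)+\lambda^2\operatorname{Var}^2(A)-2\lambda\operatorname{Var}(A)\operatorname{Var}(Y)(2\rho_{YA}^2-1)}\Big\}.$$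
   Context: A (possibly randomized) representation is $Z=g(X,S)$ with auxiliary randomness $S$ independent of $(X,A,Y)$. $(X,\phi)$ is called regular if for every positive semidefinite operator $M$ with $0\preceq M\preceq\Sigma$ there exists a (possibly randomized) representation $Z=g(X)$ such that $\operatorname{Var}\mathbb{E}[\phi(X)\mid Z]=M$ (the covariance operator of $\mathbb{E}[\phi(X)\mid Z]$). *)

theory Defs
  imports "HOL-Probability.Probability"
begin

definition cov :: "'a measure \<Rightarrow> ('a \<Rightarrow> real) \<Rightarrow> ('a \<Rightarrow> real) \<Rightarrow> real" where
  "cov M f h = prob_space.expectation M
      (\<lambda>\<omega>. (f \<omega> - prob_space.expectation M f) * (h \<omega> - prob_space.expectation M h))"

definition corr :: "'a measure \<Rightarrow> ('a \<Rightarrow> real) \<Rightarrow> ('a \<Rightarrow> real) \<Rightarrow> real" where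
  "corr M f h = cov M f h / sqrt (prob_space.variance M f * prob_space.variance M h)"

(* A (possibly randomized) representation Z = g(X,S): auxiliary randomness S with values in MSa,
   independent of X (joint law = product of laws; hence of (X,A,Y), as A and Y are functions of X), and a measurable g. *)
definition representation ::
  "'a measure \<Rightarrow> ('a \<Rightarrow> 'x) \<Rightarrow> 'x measure \<Rightarrow> ('a \<Rightarrow> 's) \<Rightarrow> 's measure
     \<Rightarrow> ('x \<times> 's \<Rightarrow> 'z) \<Rightarrow> 'z measure \<Rightarrow> bool" where
  "representation M X MX S MSa g MZa \<longleftrightarrow>
     S \<in> measurable M MSa \<and> g \<in> measurable (MX \<Otimes>\<^sub>M MSa) MZa \<and>
     distr M (MX \<Otimes>\<^sub>M MSa) (\<lambda>\<omega>. (X \<omega>, S \<omega>)) = distr M MX X \<Otimes>\<^sub>M distr M MSa S"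

definition rep_algebra ::
  "'a measure \<Rightarrow> ('a \<Rightarrow> 'x) \<Rightarrow> ('a \<Rightarrow> 's) \<Rightarrow> ('x \<times> 's \<Rightarrow> 'z) \<Rightarrow> 'z measure \<Rightarrow> 'a measure" where
  "rep_algebra M X S g MZa = vimage_algebra (space M) (\<lambda>\<omega>. g (X \<omega>, S \<omega>)) MZa"

definition cexp ::
  "'a measure \<Rightarrow> ('a \<Rightarrow> 'x) \<Rightarrow> ('a \<Rightarrow> 's) \<Rightarrow> ('x \<times> 's \<Rightarrow> 'z) \<Rightarrow> 'z measure
     \<Rightarrow> ('a \<Rightarrow> real) \<Rightarrow> ('a \<Rightarrow> real)" where
  "cexp M X S g MZa f = real_cond_exp M (rep_algebra M X S g MZa) f"

definition var_cexp ::
  "'a measure \<Rightarrow> ('a \<Rightarrow> 'x) \<Rightarrow> ('a \<Rightarrow> 's) \<Rightarrow> ('x \<times> 's \<Rightarrow> 'z) \<Rightarrow> 'z measure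
     \<Rightarrow> ('a \<Rightarrow> real) \<Rightarrow> real" where
  "var_cexp M X S g MZa f = prob_space.variance M (cexp M X S g MZa f)"

(* C is the covariance operator of E[phi(X) | Z]: for all h k,
   <h, C k> = Cov(<E[phi(X)|Z], h>, <E[phi(X)|Z], k>) = Cov(E[<phi(X),h>|Z], E[<phi(X),k>|Z]) *)
definition is_cov_op_cexp ::
  "'a measure \<Rightarrow> ('a \<Rightarrow> 'x) \<Rightarrow> ('x \<Rightarrow> 'h::real_inner) \<Rightarrow> ('a \<Rightarrow> 's) \<Rightarrow> ('x \<times> 's \<Rightarrow> 'z)
     \<Rightarrow> 'z measure \<Rightarrow> ('h \<Rightarrow> 'h) \<Rightarrow> bool" where
  "is_cov_op_cexp M X \<phi> S g MZa C \<longleftrightarrow>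
     (\<forall>h k. inner h (C k) =
        cov M (cexp M X S g MZa (\<lambda>\<omega>. inner (\<phi> (X \<omega>)) h))
              (cexp M X S g MZa (\<lambda>\<omega>. inner (\<phi> (X \<omega>)) k)))"

(* Sigma = Var phi(X), given through its bilinear form <h, Sigma k> = Cov(<phi(X),h>, <phi(X),k>) *)
definition Sigma_form :: "'a measure \<Rightarrow> ('a \<Rightarrow> 'x) \<Rightarrow> ('x \<Rightarrow> 'h::real_inner) \<Rightarrow> 'h \<Rightarrow> 'h \<Rightarrow> real" where
  "Sigma_form M X \<phi> h k = cov M (\<lambda>\<omega>. inner (\<phi> (X \<omega>)) h) (\<lambda>\<omega>. inner (\<phi> (X \<omega>)) k)"

definition psd_below_Sigma :: "'a measure \<Rightarrow> ('a \<Rightarrow> 'x) \<Rightarrow> ('x \<Rightarrow> 'h::real_inner) \<Rightarrow> ('h \<Rightarrow> 'h) \<Rightarrow> bool" where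
  "psd_below_Sigma M X \<phi> C \<longleftrightarrow>
     bounded_linear C \<and> (\<forall>h k. inner h (C k) = inner (C h) k) \<and>
     (\<forall>h. 0 \<le> inner h (C h)) \<and> (\<forall>h. inner h (C h) \<le> Sigma_form M X \<phi> h h)"

definition regular ::
  "'s itself \<Rightarrow> 'z itself \<Rightarrow> 'a measure \<Rightarrow> ('a \<Rightarrow> 'x) \<Rightarrow> 'x measure \<Rightarrow> ('x \<Rightarrow> 'h::real_inner) \<Rightarrow> bool" where
  "regular _ _ M X MX \<phi> \<longleftrightarrow>
     (\<forall>C. psd_below_Sigma M X \<phi> C \<longrightarrow>
        (\<exists>(S::'a \<Rightarrow> 's) MSa (g::'x \<times> 's \<Rightarrow> 'z) MZa.
           representation M X MX S MSa g MZa \<and> is_cov_op_cexp M X \<phi> S g MZa C))"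

(* H is a reproducing kernel Hilbert space on the points of type 'x with feature map phi:
   a Hilbert space realised (injectively; linearity follows from the reproducing property) as real functions on 'x via evl,
   with the reproducing property evl f x = <f, phi x>. *)
definition rkhs_feature :: "('h::{real_inner,complete_space} \<Rightarrow> 'x \<Rightarrow> real) \<Rightarrow> ('x \<Rightarrow> 'h) \<Rightarrow> bool" where
  "rkhs_feature evl \<phi> \<longleftrightarrow> inj evl \<and> (\<forall>f x. evl f x = inner f (\<phi> x))"

end

theory Submission
  imports Defs
begin

text \<open>
  Let \<open>\<Sigma>\<close> be the covariance form of \<open>\<phi>(X)\<close> and put \<open>p = Var Y = \<Sigma>(y,y)\<close>, \<open>q = Var A = \<Sigma>(a,a)\<close>,
  \<open>r = Cov(Y,A) = \<Sigma>(y,a)\<close>. For any direction \<open>u\<close>, the functional \<open>\<Sigma>(-,u)\<close> is bounded, so by Riesz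
  it is \<open>\<langle>-,w\<rangle>\<close>, and the rank-one operator with form \<open>\<Sigma>(h,u)\<^sup>2 / \<Sigma>(u,u)\<close> lies between
  \<open>0\<close> and \<open>\<Sigma>\<close> by Cauchy-Schwarz. Regularity turns it into a representation with
  \<open>Var E[\<langle>\<phi>(X),h\<rangle> | Z] = \<Sigma>(h,u)\<^sup>2 / \<Sigma>(u,u)\<close> for all \<open>h\<close>. Choosing \<open>u\<close> in the span of \<open>y\<close>
  and \<open>a\<close> reduces all three claims to algebra in \<open>p, q, r\<close>: \<open>u = q y - r a\<close> is \<open>\<Sigma>\<close>-orthogonal to \<open>a\<close>,
  \<open>u = y\<close> keeps all of \<open>Y\<close>, and the trade-off uses \<open>u = (\<mu> - \<lambda> q) y + \<lambda> r a\<close> with \<open>\<mu>\<close> the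
  smaller root of \<open>\<mu>\<^sup>2 + (p - \<lambda> q) \<mu> - \<lambda> (p q - r\<^sup>2) = 0\<close>.
\<close>

lemma quadratic_nonneg_imp_discriminant_le:
  fixes a b c :: real
  assumes nonneg: "\<And>t. 0 \<le> a + 2 * b * t + c * t\<^sup>2" and "0 \<le> c"
  shows "b\<^sup>2 \<le> a * c"
proof (cases "c = 0")
  case True
  have "b = 0"
  proof (rule ccontr)
    assume "b \<noteq> 0"
    with nonneg[of "- (\<bar>a\<bar> + 1) / (2 * b)"] True show False by simp
  qed
  then show ?thesis using nonneg[of 0] True by simp
next
  case False
  with \<open>0 \<le> c\<close> have "0 < c" by simp
  have "0 \<le> a + 2 * b * (- b / c) + c * (- b / c)\<^sup>2" by (rule nonneg)
  also have "\<dots> = (a * c - b\<^sup>2) / c"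
    using \<open>0 < c\<close> by (simp add: field_simps power2_eq_square)
  finally show ?thesis using \<open>0 < c\<close> by (simp add: zero_le_divide_iff)
qed

lemma tradeoff_root_identity:
  fixes p q r lam :: real
  assumes "0 < p" "0 \<le> q" "0 \<le> lam" "r\<^sup>2 \<le> p * q"
  defines "\<mu> \<equiv> 1/2 * (lam * q - p - sqrt ((lam * q - p)\<^sup>2 + 4 * lam * (p * q - r\<^sup>2)))"
  defines "\<alpha> \<equiv> \<mu> - lam * q" and "\<beta> \<equiv> lam * r"
  defines "N \<equiv> \<alpha> * (\<alpha> * p + \<beta> * r) + \<beta> * (\<alpha> * r + \<beta> * q)"
  shows "lam * ((\<alpha> * r + \<beta> * q)\<^sup>2 / N) - (\<alpha> * p + \<beta> * r)\<^sup>2 / N = \<mu>"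
proof -
  define D where "D = (lam * q - p)\<^sup>2 + 4 * lam * (p * q - r\<^sup>2)"
  have "0 \<le> D" unfolding D_def using assms(3,4) by simp
  have \<mu>_eq: "\<mu> = 1/2 * (lam * q - p - sqrt D)" unfolding \<mu>_def D_def ..
  have "\<mu>\<^sup>2 + (p - lam * q) * \<mu> - lam * (p * q - r\<^sup>2) = 0"
    using \<open>0 \<le> D\<close> unfolding \<mu>_eq by (simp add: D_def power2_eq_square field_simps)
  then have sy: "\<alpha> * p + \<beta> * r = - \<mu> * \<alpha>"
    unfolding \<alpha>_def \<beta>_def by (simp add: algebra_simps power2_eq_square)
  have sa: "\<alpha> * r + \<beta> * q = \<mu> * r"
    unfolding \<alpha>_def \<beta>_def by (simp add: algebra_simps)
  have N_eq: "N = \<mu> * (lam * r\<^sup>2 - \<alpha>\<^sup>2)"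
    unfolding N_def sy sa unfolding \<beta>_def by (simp add: algebra_simps power2_eq_square)
  show ?thesis
  proof (cases "N = 0")
    case True
    have "(\<alpha> * p + \<beta> * r)\<^sup>2 + \<beta>\<^sup>2 * (p * q - r\<^sup>2) = p * N"
      unfolding N_def by (simp add: algebra_simps power2_eq_square)
    then have "(\<alpha> * p + \<beta> * r)\<^sup>2 + \<beta>\<^sup>2 * (p * q - r\<^sup>2) = 0" using True by simp
    moreover have "0 \<le> \<beta>\<^sup>2 * (p * q - r\<^sup>2)" using assms(4) by simp
    ultimately have "(\<alpha> * p + \<beta> * r)\<^sup>2 \<le> 0" by linarith
    moreover have "\<alpha> < 0"
    proof -
      have "2 * \<alpha> = - lam * q - p - sqrt D" unfolding \<alpha>_def \<mu>_eq by simp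
      moreover have "0 \<le> lam * q" and "0 \<le> sqrt D" using assms(2,3) \<open>0 \<le> D\<close> by simp_all
      ultimately show ?thesis using assms(1) by linarith
    qed
    ultimately have "\<mu> = 0" unfolding sy by simp
    with True show ?thesis by simp
  next
    case False
    have "lam * (\<alpha> * r + \<beta> * q)\<^sup>2 - (\<alpha> * p + \<beta> * r)\<^sup>2 = \<mu> * N"
      unfolding N_eq sy sa by (simp add: algebra_simps power2_eq_square)
    with False show ?thesis by (simp add: field_simps)
  qed
qed

lemma Cauchy_if_dist_le_null_sum:
  fixes x :: "nat \<Rightarrow> 'a::metric_space"
  assumes dist_le: "\<And>m n. dist (x m) (x n) \<le> e m + e n" and "e \<longlonglongrightarrow> 0"
  shows "Cauchy x"
proof (rule metric_CauchyI)
  fix \<epsilon> :: real assume "0 < \<epsilon>"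
  then have "\<forall>\<^sub>F n in sequentially. e n < \<epsilon> / 2"
    using \<open>e \<longlonglongrightarrow> 0\<close> by (intro order_tendstoD) auto
  then obtain N where N: "\<And>n. n \<ge> N \<Longrightarrow> e n < \<epsilon> / 2"
    unfolding eventually_sequentially by blast
  show "\<exists>N. \<forall>m\<ge>N. \<forall>n\<ge>N. dist (x m) (x n) < \<epsilon>"
  proof (intro exI allI impI)
    fix m n assume "N \<le> m" "N \<le> n"
    then have "e m + e n < \<epsilon> / 2 + \<epsilon> / 2" by (intro add_strict_mono N)
    with dist_le[of m n] show "dist (x m) (x n) < \<epsilon>" by simp
  qed
qed

lemma closed_convex_obtains_min_norm:
  fixes S :: "'a::{real_inner,complete_space} set"
  assumes "closed S" "convex S" "S \<noteq> {}"
  obtains x where "x \<in> S" "\<And>y. y \<in> S \<Longrightarrow> norm x \<le> norm y"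
proof -
  define d where "d = Inf (norm ` S)"
  have bdd: "bdd_below (norm ` S)" by (intro bdd_belowI[of _ 0]) auto
  have d_le: "d \<le> norm y" if "y \<in> S" for y
    unfolding d_def using bdd that by (intro cInf_lower) auto
  have "0 \<le> d" unfolding d_def using \<open>S \<noteq> {}\<close> by (intro cInf_greatest) auto
  have "\<exists>x\<in>S. norm x < d + 1 / Suc n" for n
    using cInf_less_iff[of "norm ` S" "d + 1 / Suc n"] bdd \<open>S \<noteq> {}\<close> by (simp add: d_def)
  then obtain xs where xs_in: "\<And>n. xs n \<in> S" and xs_lt: "\<And>n. norm (xs n) < d + 1 / Suc n"
    by metis
  have upper: "(\<lambda>n. d + 1 / Suc n) \<longlonglongrightarrow> d"
    using tendsto_add[OF tendsto_const[of d] LIMSEQ_Suc[OF lim_inverse_n']] by simp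
  have norm_xs: "(\<lambda>n. norm (xs n)) \<longlonglongrightarrow> d"
  proof (rule tendsto_sandwich[OF _ _ tendsto_const upper])
    show "\<forall>\<^sub>F n in sequentially. d \<le> norm (xs n)" using d_le xs_in by simp
    show "\<forall>\<^sub>F n in sequentially. norm (xs n) \<le> d + 1 / Suc n"
      using xs_lt by (intro always_eventually allI less_imp_le)
  qed
  define e where "e n = sqrt (2 * ((norm (xs n))\<^sup>2 - d\<^sup>2))" for n
  have "dist (xs m) (xs n) \<le> e m + e n" for m n
  proof -
    have "(1/2) *\<^sub>R xs m + (1/2) *\<^sub>R xs n \<in> S"
      using \<open>convex S\<close> xs_in by (intro convexD) auto
    then have "d \<le> norm ((1/2) *\<^sub>R (xs m + xs n))"
      unfolding scaleR_add_right by (rule d_le)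
    then have "2 * d \<le> norm (xs m + xs n)" by simp
    then have "(2 * d)\<^sup>2 \<le> (norm (xs m + xs n))\<^sup>2"
      using \<open>0 \<le> d\<close> by (intro power_mono) auto
    moreover have "(norm (xs m - xs n))\<^sup>2 = 2 * (norm (xs m))\<^sup>2 + 2 * (norm (xs n))\<^sup>2 - (norm (xs m + xs n))\<^sup>2"
      by (simp add: power2_norm_eq_inner inner_add inner_diff inner_commute)
    ultimately have "(dist (xs m) (xs n))\<^sup>2 \<le> 2 * ((norm (xs m))\<^sup>2 - d\<^sup>2) + 2 * ((norm (xs n))\<^sup>2 - d\<^sup>2)"
      by (simp add: dist_norm power_mult_distrib)
    then have "dist (xs m) (xs n) \<le> sqrt (2 * ((norm (xs m))\<^sup>2 - d\<^sup>2) + 2 * ((norm (xs n))\<^sup>2 - d\<^sup>2))"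
      by (simp add: real_le_rsqrt)
    also have "\<dots> \<le> e m + e n"
      unfolding e_def using d_le[OF xs_in] \<open>0 \<le> d\<close>
      by (intro sqrt_add_le_add_sqrt) (auto intro: power_mono)
    finally show ?thesis .
  qed
  moreover have "e \<longlonglongrightarrow> sqrt (2 * (d\<^sup>2 - d\<^sup>2))"
    unfolding e_def by (intro tendsto_intros norm_xs)
  ultimately have "Cauchy xs" by (intro Cauchy_if_dist_le_null_sum[of xs e]) auto
  then obtain x where "xs \<longlonglongrightarrow> x" by (auto simp: Cauchy_convergent_iff convergent_def)
  have "x \<in> S" using \<open>closed S\<close> xs_in \<open>xs \<longlonglongrightarrow> x\<close> by (rule closed_sequentially)
  moreover have "norm x = d" using tendsto_norm[OF \<open>xs \<longlonglongrightarrow> x\<close>] norm_xs by (rule LIMSEQ_unique)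
  ultimately show ?thesis using d_le by (intro that) auto
qed

lemma riesz_representation:
  fixes f :: "'a::{real_inner,complete_space} \<Rightarrow> real"
  assumes "bounded_linear f"
  obtains w where "\<And>h. f h = inner h w"
proof (cases "\<forall>h. f h = 0")
  case True
  then show ?thesis by (intro that[of 0]) simp
next
  case False
  interpret f: bounded_linear f by (rule assms)
  from False obtain h0 where "f h0 \<noteq> 0" by auto
  have closed: "closed (f -` {1})" by (intro closed_vimage f.continuous_on continuous_on_id) simp
  have convex: "convex (f -` {1})" using f.linear by (intro convex_linear_vimage convex_singleton)
  have "h0 /\<^sub>R f h0 \<in> f -` {1}" using \<open>f h0 \<noteq> 0\<close> by (simp add: f.scale)
  then have "f -` {1} \<noteq> {}" by blast
  then obtain x where "x \<in> f -` {1}" and x_min: "\<And>k. k \<in> f -` {1} \<Longrightarrow> norm x \<le> norm k"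
    by (rule closed_convex_obtains_min_norm[OF closed convex]) blast
  then have "f x = 1" by simp
  have orth: "inner x k = 0" if "f k = 0" for k
  proof -
    have "0 \<le> 0 + 2 * inner x k * t + inner k k * t\<^sup>2" for t
    proof -
      have "(norm x)\<^sup>2 \<le> (norm (x + t *\<^sub>R k))\<^sup>2"
        using \<open>f x = 1\<close> \<open>f k = 0\<close> x_min[of "x + t *\<^sub>R k"] by (simp add: f.add f.scale)
      moreover have "(norm (x + t *\<^sub>R k))\<^sup>2 = (norm x)\<^sup>2 + 2 * inner x k * t + inner k k * t\<^sup>2"
        unfolding power2_norm_eq_inner by (simp add: inner_add inner_commute power2_eq_square algebra_simps)
      ultimately show ?thesis by linarith
    qed
    then have "(inner x k)\<^sup>2 \<le> 0"
      using quadratic_nonneg_imp_discriminant_le[of 0 "inner x k" "inner k k"] by simp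
    then show ?thesis by simp
  qed
  show ?thesis
  proof (rule that)
    fix h
    have "inner x (h - f h *\<^sub>R x) = 0"
      using \<open>f x = 1\<close> by (intro orth) (simp add: f.diff f.scale)
    then have "inner x h = f h * inner x x" by (simp add: inner_diff)
    moreover have "x \<noteq> 0" using \<open>f x = 1\<close> by auto
    ultimately show "f h = inner h (x /\<^sub>R (norm x)\<^sup>2)"
      by (simp add: power2_norm_eq_inner inner_commute)
  qed
qed

locale square_integrable_feature = prob_space M for M :: "'a measure" +
  fixes X :: "'a \<Rightarrow> 'x" and MX :: "'x measure" and \<phi> :: "'x \<Rightarrow> 'h::{real_inner,complete_space}"
  assumes X_measurable: "X \<in> measurable M MX"
    and \<phi>_measurable: "\<phi> \<in> borel_measurable MX"
    and integrable_norm_square: "integrable M (\<lambda>\<omega>. (norm (\<phi> (X \<omega>)))\<^sup>2)"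
begin

abbreviation coord :: "'h \<Rightarrow> 'a \<Rightarrow> real" where
  "coord h \<equiv> \<lambda>\<omega>. inner (\<phi> (X \<omega>)) h"

abbreviation Sig :: "'h \<Rightarrow> 'h \<Rightarrow> real" where
  "Sig \<equiv> Sigma_form M X \<phi>"

lemma borel_measurable_coord [measurable]: "coord h \<in> borel_measurable M"
  by (rule borel_measurable_continuous_on[where f="\<lambda>x. inner x h"])
     (auto intro!: continuous_intros measurable_compose[OF X_measurable \<phi>_measurable])

lemma integrable_coord_mult: "integrable M (\<lambda>\<omega>. coord h \<omega> * coord k \<omega>)"
proof (rule Bochner_Integration.integrable_bound)
  show "integrable M (\<lambda>\<omega>. (norm h * norm k) * (norm (\<phi> (X \<omega>)))\<^sup>2)"
    using integrable_norm_square by simp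
  show "AE \<omega> in M. norm (coord h \<omega> * coord k \<omega>) \<le> norm ((norm h * norm k) * (norm (\<phi> (X \<omega>)))\<^sup>2)"
  proof (intro AE_I2)
    fix \<omega>
    have "\<bar>coord h \<omega>\<bar> * \<bar>coord k \<omega>\<bar> \<le> (norm (\<phi> (X \<omega>)) * norm h) * (norm (\<phi> (X \<omega>)) * norm k)"
      by (intro mult_mono Cauchy_Schwarz_ineq2) auto
    then show "norm (coord h \<omega> * coord k \<omega>) \<le> norm ((norm h * norm k) * (norm (\<phi> (X \<omega>)))\<^sup>2)"
      by (simp add: abs_mult power2_eq_square algebra_simps)
  qed
qed simp

lemma integrable_coord: "integrable M (coord h)"
proof (rule square_integrable_imp_integrable)
  show "integrable M (\<lambda>\<omega>. (coord h \<omega>)\<^sup>2)"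
    using integrable_coord_mult[of h h] by (simp add: power2_eq_square)
qed (rule borel_measurable_coord)

lemma Sigma_form_eq:
  "Sig h k = expectation (\<lambda>\<omega>. coord h \<omega> * coord k \<omega>) - expectation (coord h) * expectation (coord k)"
  unfolding Sigma_form_def cov_def
  using integrable_coord_mult[of h k] integrable_coord[of h] integrable_coord[of k]
  by (simp add: left_diff_distrib right_diff_distrib prob_space)

lemma Sigma_form_add_left: "Sig (h1 + h2) k = Sig h1 k + Sig h2 k"
  unfolding Sigma_form_eq
  using integrable_coord_mult[of h1 k] integrable_coord_mult[of h2 k] integrable_coord[of h1] integrable_coord[of h2]
  by (simp add: inner_add_right distrib_right)

lemma Sigma_form_scaleR_left: "Sig (c *\<^sub>R h) k = c * Sig h k"
  unfolding Sigma_form_eq by (simp add: algebra_simps)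

lemma Sigma_form_commute: "Sig h k = Sig k h"
  unfolding Sigma_form_eq by (simp add: mult.commute)

lemma Sigma_form_combination_left: "Sig (\<alpha> *\<^sub>R y + \<beta> *\<^sub>R a) h = \<alpha> * Sig y h + \<beta> * Sig a h"
  by (simp add: Sigma_form_add_left Sigma_form_scaleR_left)

lemma Sigma_form_combination: "Sig h (\<alpha> *\<^sub>R y + \<beta> *\<^sub>R a) = \<alpha> * Sig h y + \<beta> * Sig h a"
  using Sigma_form_combination_left[of \<alpha> y \<beta> a h] by (simp only: Sigma_form_commute[of h])

lemma Sigma_form_nonneg: "0 \<le> Sig h h"
  unfolding Sigma_form_def cov_def by (intro Bochner_Integration.integral_nonneg) simp

lemma Sigma_form_Cauchy_Schwarz: "(Sig h k)\<^sup>2 \<le> Sig h h * Sig k k"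
proof (rule quadratic_nonneg_imp_discriminant_le)
  fix t :: real
  have "0 \<le> Sig (h + t *\<^sub>R k) (h + t *\<^sub>R k)" by (rule Sigma_form_nonneg)
  also have "\<dots> = Sig h h + 2 * Sig h k * t + Sig k k * t\<^sup>2"
    using Sigma_form_combination[of "h + t *\<^sub>R k" 1 h t k] Sigma_form_commute[of k h]
    by (simp add: Sigma_form_add_left Sigma_form_scaleR_left power2_eq_square algebra_simps)
  finally show "0 \<le> Sig h h + 2 * Sig h k * t + Sig k k * t\<^sup>2" .
qed (rule Sigma_form_nonneg)

lemma Sigma_form_le: "Sig h h \<le> expectation (\<lambda>\<omega>. (norm (\<phi> (X \<omega>)))\<^sup>2) * (norm h)\<^sup>2"
proof -
  have "Sig h h \<le> expectation (\<lambda>\<omega>. coord h \<omega> * coord h \<omega>)"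
    unfolding Sigma_form_eq by simp
  also have "\<dots> \<le> expectation (\<lambda>\<omega>. (norm (\<phi> (X \<omega>)))\<^sup>2 * (norm h)\<^sup>2)"
  proof (rule integral_mono)
    fix \<omega>
    have "\<bar>coord h \<omega>\<bar>\<^sup>2 \<le> (norm (\<phi> (X \<omega>)) * norm h)\<^sup>2"
      by (intro power_mono Cauchy_Schwarz_ineq2) auto
    then show "coord h \<omega> * coord h \<omega> \<le> (norm (\<phi> (X \<omega>)))\<^sup>2 * (norm h)\<^sup>2"
      by (simp add: power2_eq_square algebra_simps)
  qed (use integrable_coord_mult integrable_norm_square in simp_all)
  finally show ?thesis by simp
qed

lemma bounded_linear_Sigma_form: "bounded_linear (\<lambda>h. Sig h k)"
proof (rule bounded_linear_intro)
  fix h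
  define E where "E = expectation (\<lambda>\<omega>. (norm (\<phi> (X \<omega>)))\<^sup>2)"
  have "0 \<le> E" unfolding E_def by (intro Bochner_Integration.integral_nonneg) simp
  have "(Sig h k)\<^sup>2 \<le> Sig h h * Sig k k" by (rule Sigma_form_Cauchy_Schwarz)
  also have "\<dots> \<le> (E * (norm h)\<^sup>2) * Sig k k"
    unfolding E_def by (rule mult_right_mono[OF Sigma_form_le Sigma_form_nonneg])
  also have "\<dots> = (norm h * sqrt (E * Sig k k))\<^sup>2"
    using \<open>0 \<le> E\<close> Sigma_form_nonneg[of k] by (simp add: power_mult_distrib)
  finally show "norm (Sig h k) \<le> norm h * sqrt (E * Sig k k)"
    using \<open>0 \<le> E\<close> Sigma_form_nonneg[of k] by (simp add: abs_le_square_iff[symmetric])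
qed (simp_all add: Sigma_form_add_left Sigma_form_scaleR_left)

lemma regular_obtains_representation:
  assumes "regular TYPE('s) TYPE('z) M X MX \<phi>" and "psd_below_Sigma M X \<phi> C"
  obtains S :: "'a \<Rightarrow> 's" and MSa and g :: "'x \<times> 's \<Rightarrow> 'z" and MZa
  where "representation M X MX S MSa g MZa"
    and "\<And>h. var_cexp M X S g MZa (coord h) = inner h (C h)"
proof -
  from assms obtain S :: "'a \<Rightarrow> 's" and MSa and g :: "'x \<times> 's \<Rightarrow> 'z" and MZa
    where "representation M X MX S MSa g MZa" and "is_cov_op_cexp M X \<phi> S g MZa C"
    unfolding regular_def by blast
  then show ?thesis
    by (intro that) (auto simp: is_cov_op_cexp_def var_cexp_def cov_def power2_eq_square)
qed

text \<open>If \<open>Sig u u = 0\<close> this is the zero operator, because \<open>x / 0 = 0\<close>.\<close>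

lemma psd_below_Sigma_rank_one:
  assumes "\<And>h. Sig h u = inner h w"
  shows "psd_below_Sigma M X \<phi> (\<lambda>k. (inner k w / Sig u u) *\<^sub>R w)"
  unfolding psd_below_Sigma_def
proof (intro conjI allI)
  show "bounded_linear (\<lambda>k. (inner k w / Sig u u) *\<^sub>R w)"
    by (intro bounded_linear_scaleR_const
        bounded_linear_compose[OF bounded_linear_divide bounded_linear_inner_left])
  fix h
  have "(Sig h u)\<^sup>2 / Sig u u \<le> Sig h h"
    using Sigma_form_Cauchy_Schwarz[of h u] Sigma_form_nonneg[of h] Sigma_form_nonneg[of u]
    by (cases "Sig u u = 0") (simp_all add: divide_le_eq mult.commute)
  then show "inner h ((inner h w / Sig u u) *\<^sub>R w) \<le> Sig h h"
    by (simp add: assms power2_eq_square)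
  show "0 \<le> inner h ((inner h w / Sig u u) *\<^sub>R w)"
    using Sigma_form_nonneg[of u] by (simp add: mult.commute)
  fix k
  show "inner h ((inner k w / Sig u u) *\<^sub>R w) = inner ((inner h w / Sig u u) *\<^sub>R w) k"
    by (simp add: inner_commute)
qed

lemma regular_obtains_rank_one_representation:
  assumes "regular TYPE('s) TYPE('z) M X MX \<phi>"
  obtains S :: "'a \<Rightarrow> 's" and MSa and g :: "'x \<times> 's \<Rightarrow> 'z" and MZa
  where "representation M X MX S MSa g MZa"
    and "\<And>h. var_cexp M X S g MZa (coord h) = (Sig h u)\<^sup>2 / Sig u u"
proof -
  obtain w where w: "\<And>h. Sig h u = inner h w"
    using riesz_representation[OF bounded_linear_Sigma_form] by blast
  show ?thesis
    by (rule regular_obtains_representation[OF assms psd_below_Sigma_rank_one[OF w]], rule that)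
      (simp_all add: w power2_eq_square)
qed

lemma regular_fair_representation:
  assumes "regular TYPE('s) TYPE('z) M X MX \<phi>" and "0 < Sig a a"
  shows "\<exists>(S::'a \<Rightarrow> 's) MSa (g::'x \<times> 's \<Rightarrow> 'z) MZa. representation M X MX S MSa g MZa
    \<and> var_cexp M X S g MZa (coord a) = 0
    \<and> var_cexp M X S g MZa (coord y) = Sig y y - (Sig y a)\<^sup>2 / Sig a a"
proof -
  define u where "u = Sig a a *\<^sub>R y + (- Sig y a) *\<^sub>R a"
  have a_u: "Sig a u = 0"
    unfolding u_def Sigma_form_combination by (simp add: Sigma_form_commute[of a y] mult.commute)
  have y_u: "Sig y u = Sig a a * Sig y y - (Sig y a)\<^sup>2"
    unfolding u_def Sigma_form_combination by (simp add: power2_eq_square)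
  have "Sig u u = Sig a a * Sig y u"
    by (subst (1) u_def, subst Sigma_form_combination_left) (simp add: a_u)
  then have "(Sig y u)\<^sup>2 / Sig u u = Sig y u / Sig a a"
    by (cases "Sig y u = 0") (simp_all add: power2_eq_square)
  also have "\<dots> = Sig y y - (Sig y a)\<^sup>2 / Sig a a"
    using \<open>0 < Sig a a\<close> unfolding y_u by (simp add: diff_divide_distrib)
  finally have y_var: "(Sig y u)\<^sup>2 / Sig u u = Sig y y - (Sig y a)\<^sup>2 / Sig a a" .
  show ?thesis
  proof (rule regular_obtains_rank_one_representation[OF assms(1), of u])
    fix S :: "'a \<Rightarrow> 's" and MSa and g :: "'x \<times> 's \<Rightarrow> 'z" and MZa
    assume rep: "representation M X MX S MSa g MZa"
      and var: "\<And>h. var_cexp M X S g MZa (coord h) = (Sig h u)\<^sup>2 / Sig u u"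
    have "var_cexp M X S g MZa (coord a) = 0" using var a_u by simp
    moreover have "var_cexp M X S g MZa (coord y) = Sig y y - (Sig y a)\<^sup>2 / Sig a a"
      using var y_var by simp
    ultimately show ?thesis using rep by blast
  qed
qed

lemma regular_sufficient_representation:
  assumes "regular TYPE('s) TYPE('z) M X MX \<phi>" and "0 < Sig y y"
  shows "\<exists>(S::'a \<Rightarrow> 's) MSa (g::'x \<times> 's \<Rightarrow> 'z) MZa. representation M X MX S MSa g MZa
    \<and> var_cexp M X S g MZa (coord y) = Sig y y
    \<and> var_cexp M X S g MZa (coord a) = (Sig y a)\<^sup>2 / Sig y y"
proof (rule regular_obtains_rank_one_representation[OF assms(1), of y])
  fix S :: "'a \<Rightarrow> 's" and MSa and g :: "'x \<times> 's \<Rightarrow> 'z" and MZa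
  assume rep: "representation M X MX S MSa g MZa"
    and var: "\<And>h. var_cexp M X S g MZa (coord h) = (Sig h y)\<^sup>2 / Sig y y"
  have "var_cexp M X S g MZa (coord y) = Sig y y"
    using var \<open>0 < Sig y y\<close> by (simp add: power2_eq_square)
  moreover have "var_cexp M X S g MZa (coord a) = (Sig y a)\<^sup>2 / Sig y y"
    using var by (simp add: Sigma_form_commute[of a])
  ultimately show ?thesis using rep by blast
qed

lemma regular_tradeoff_representation:
  assumes "regular TYPE('s) TYPE('z) M X MX \<phi>" and "0 < Sig y y" and "0 \<le> lam"
  shows "\<exists>(S::'a \<Rightarrow> 's) MSa (g::'x \<times> 's \<Rightarrow> 'z) MZa. representation M X MX S MSa g MZa
    \<and> lam * var_cexp M X S g MZa (coord a) - var_cexp M X S g MZa (coord y) =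
      1/2 * (lam * Sig a a - Sig y y
        - sqrt ((lam * Sig a a - Sig y y)\<^sup>2 + 4 * lam * (Sig y y * Sig a a - (Sig y a)\<^sup>2)))"
proof -
  define \<mu> where "\<mu> = 1/2 * (lam * Sig a a - Sig y y
        - sqrt ((lam * Sig a a - Sig y y)\<^sup>2 + 4 * lam * (Sig y y * Sig a a - (Sig y a)\<^sup>2)))"
  define u where "u = (\<mu> - lam * Sig a a) *\<^sub>R y + (lam * Sig y a) *\<^sub>R a"
  have u_u: "Sig u u = (\<mu> - lam * Sig a a) * Sig y u + lam * Sig y a * Sig a u"
    by (subst (1) u_def) (rule Sigma_form_combination_left)
  have y_u: "Sig y u = (\<mu> - lam * Sig a a) * Sig y y + lam * Sig y a * Sig y a"
    unfolding u_def by (rule Sigma_form_combination)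
  have a_u: "Sig a u = (\<mu> - lam * Sig a a) * Sig y a + lam * Sig y a * Sig a a"
    unfolding u_def Sigma_form_combination by (simp add: Sigma_form_commute[of a y])
  have tradeoff: "lam * ((Sig a u)\<^sup>2 / Sig u u) - (Sig y u)\<^sup>2 / Sig u u = \<mu>"
    using tradeoff_root_identity[OF \<open>0 < Sig y y\<close> Sigma_form_nonneg \<open>0 \<le> lam\<close>
        Sigma_form_Cauchy_Schwarz[of y a]]
    unfolding u_u unfolding y_u a_u \<mu>_def .
  show ?thesis
  proof (rule regular_obtains_rank_one_representation[OF assms(1), of u])
    fix S :: "'a \<Rightarrow> 's" and MSa and g :: "'x \<times> 's \<Rightarrow> 'z" and MZa
    assume rep: "representation M X MX S MSa g MZa"
      and var: "\<And>h. var_cexp M X S g MZa (coord h) = (Sig h u)\<^sup>2 / Sig u u"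
    have "lam * var_cexp M X S g MZa (coord a) - var_cexp M X S g MZa (coord y) = \<mu>"
      using var tradeoff by simp
    then show ?thesis using rep unfolding \<mu>_def by blast
  qed
qed

end

theorem theorem8:
  fixes M :: "'a measure" and X :: "'a \<Rightarrow> 'x" and MX :: "'x measure"
    and \<phi> :: "'x \<Rightarrow> 'h::{real_inner,complete_space}" and evl :: "'h \<Rightarrow> 'x \<Rightarrow> real"
    and a y :: 'h and A Y :: "'a \<Rightarrow> real"
  assumes "prob_space M"
    and "rkhs_feature evl \<phi>"
    and "X \<in> measurable M MX" and "\<phi> \<in> borel_measurable MX"
    and "integrable M (\<lambda>\<omega>. (norm (\<phi> (X \<omega>)))\<^sup>2)"
    and "\<And>\<omega>. Y \<omega> = inner (\<phi> (X \<omega>)) y"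
    and "\<And>\<omega>. A \<omega> = inner (\<phi> (X \<omega>)) a"
    and "y \<noteq> 0" and "a \<noteq> 0"
    and "prob_space.variance M Y > 0" and "prob_space.variance M A > 0"
    and "regular TYPE('s) TYPE('z) M X MX \<phi>"
  shows
    "(\<exists>(S::'a \<Rightarrow> 's) MSa (g::'x \<times> 's \<Rightarrow> 'z) MZa.
        representation M X MX S MSa g MZa \<and>
        var_cexp M X S g MZa A = 0 \<and>
        var_cexp M X S g MZa Y = prob_space.variance M Y * (1 - (corr M Y A)\<^sup>2))
     \<and>
     (\<exists>(S::'a \<Rightarrow> 's) MSa (g::'x \<times> 's \<Rightarrow> 'z) MZa.
        representation M X MX S MSa g MZa \<and>
        var_cexp M X S g MZa Y = prob_space.variance M Y \<and>
        var_cexp M X S g MZa A = prob_space.variance M A * (corr M Y A)\<^sup>2)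
     \<and>
     (\<forall>lam::real. lam \<ge> 0 \<longrightarrow>
       (\<exists>(S::'a \<Rightarrow> 's) MSa (g::'x \<times> 's \<Rightarrow> 'z) MZa.
          representation M X MX S MSa g MZa \<and>
          lam * var_cexp M X S g MZa A - var_cexp M X S g MZa Y =
            1/2 * (lam * prob_space.variance M A - prob_space.variance M Y
              - sqrt ((prob_space.variance M Y)\<^sup>2 + lam\<^sup>2 * (prob_space.variance M A)\<^sup>2
                      - 2 * lam * prob_space.variance M A * prob_space.variance M Y
                          * (2 * (corr M Y A)\<^sup>2 - 1)))))"
proof -
  interpret square_integrable_feature M X MX \<phi>
    using assms(1,3-5) by (simp add: square_integrable_feature_def square_integrable_feature_axioms_def)
  have Y: "Y = coord y" and A: "A = coord a" using assms(6,7) by auto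
  have var_Y: "prob_space.variance M Y = Sig y y" and var_A: "prob_space.variance M A = Sig a a"
    unfolding Y A Sigma_form_def cov_def by (simp_all add: power2_eq_square)
  have "0 < Sig y y" and "0 < Sig a a" using assms(10,11) var_Y var_A by simp_all
  then have corr_sq: "(corr M Y A)\<^sup>2 = (Sig y a)\<^sup>2 / (Sig y y * Sig a a)"
    unfolding corr_def var_Y var_A unfolding Y A Sigma_form_def by (simp add: power_divide)
  have fair: "Sig y y * (1 - (Sig y a)\<^sup>2 / (Sig y y * Sig a a)) = Sig y y - (Sig y a)\<^sup>2 / Sig a a"
    and sufficient: "Sig a a * ((Sig y a)\<^sup>2 / (Sig y y * Sig a a)) = (Sig y a)\<^sup>2 / Sig y y"
    and sqrt_arg: "\<And>lam. (Sig y y)\<^sup>2 + lam\<^sup>2 * (Sig a a)\<^sup>2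
      - 2 * lam * Sig a a * Sig y y * (2 * ((Sig y a)\<^sup>2 / (Sig y y * Sig a a)) - 1)
      = (lam * Sig a a - Sig y y)\<^sup>2 + 4 * lam * (Sig y y * Sig a a - (Sig y a)\<^sup>2)"
    using \<open>0 < Sig y y\<close> \<open>0 < Sig a a\<close> by (simp_all add: field_simps power2_eq_square)
  show ?thesis
    unfolding var_Y var_A corr_sq fair sufficient sqrt_arg unfolding Y A
    by (intro conjI allI impI regular_fair_representation[OF assms(12) \<open>0 < Sig a a\<close>]
        regular_sufficient_representation[OF assms(12) \<open>0 < Sig y y\<close>]
        regular_tradeoff_representation[OF assms(12) \<open>0 < Sig y y\<close>])
qed

end
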